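(* Let $\Omega\subseteq\mathbb{R}^n$ be bounded and measurable, $Y$ a Hilbert space, $S:L^2(\Omega)\to Y$ linear and continuous, $z\in Y$, $u_a,u_b\in L^\infty(\Omega)$, $u_a\le u_b$, $U_{\mathrm{ad}}=\{u\in L^2(\Omega):u_a\le u\le u_b\text{ a.e.}\}$. Let $u^\dagger$ be a solution of $\min_{u\in U_{\mathrm{ad}}}\frac12\|Su-z\|_Y^2$ such that there exists $w\in Y$ with $u^\dagger=P_{U_{\mathrm{ad}}}(S^\ast w)$. Let $(\varepsilon_k)_k$ be positive reals with $\sum_{i=1}^\infty R_i<\infty$, where $R_i:=\frac{\varepsilon_i}{\alpha_i}+\frac{\varepsilon_i^2}{\alpha_i^2}+\frac{\gamma_{i-1}\varepsilon_i}{\alpha_i}+\frac{\varepsilon_i^2}{\alpha_i}$. Assume $S_h=S$ and let $(u_k^{\mathrm{in}})_k$ be generated by the inexact Bregman algorithm in the context. Then $u_k^{\mathrm{in}}\to u^\dagger$ in $L^2(\Omega)$.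
   Context: $\|\cdot\|,(\cdot,\cdot)$: $L^2(\Omega)$ norm and inner product; $P_{U_{\mathrm{ad}}}$: $L^2$-projection onto $U_{\mathrm{ad}}$. $(\alpha_k)_k$ is a bounded sequence of positive reals, $\gamma_k:=\sum_{j=1}^k\alpha_j^{-1}$, $\gamma_0=0$. Define $\mathcal B(\alpha,\lambda,u):=(1+\frac1\alpha)\|u-P_{U_{\mathrm{ad}}}(\frac1\alpha S_h^\ast(z-S_hu)+\lambda)\|$ (here with $S_h=S$). Inexact Bregman algorithm: $u_0^{\mathrm{in}}=P_{U_{\mathrm{ad}}}(0)$, $\lambda_0^{\mathrm{in}}=0$; for $k=1,2,\dots$ find $u_k^{\mathrm{in}}\in U_{\mathrm{ad}}$ with $\mathcal B(\alpha_k,\lambda_{k-1}^{\mathrm{in}},u_k^{\mathrm{in}})\le\varepsilon_k$, then set $\lambda_k^{\mathrm{in}}=\sum_{i=1}^k\frac1{\alpha_i}S_h^\ast(z-S_hu_i^{\mathrm{in}})$. *)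

theory Defs
  imports "HOL-Analysis.Analysis"
begin

text \<open>L^2(Omega), Omega a Lebesgue measurable subset of a Euclidean space, elements represented
  by functions (identified up to a.e. equality through the seminorm).\<close>

definition L2 :: "'a::euclidean_space set \<Rightarrow> ('a \<Rightarrow> real) set" where
  "L2 \<Omega> = {u. u \<in> borel_measurable (lebesgue_on \<Omega>) \<and> integrable (lebesgue_on \<Omega>) (\<lambda>x. (u x)\<^sup>2)}"

definition l2inner :: "'a::euclidean_space set \<Rightarrow> ('a \<Rightarrow> real) \<Rightarrow> ('a \<Rightarrow> real) \<Rightarrow> real" where
  "l2inner \<Omega> u v = (\<integral>x. u x * v x \<partial>lebesgue_on \<Omega>)"

definition l2norm :: "'a::euclidean_space set \<Rightarrow> ('a \<Rightarrow> real) \<Rightarrow> real" where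
  "l2norm \<Omega> u = sqrt (\<integral>x. (u x)\<^sup>2 \<partial>lebesgue_on \<Omega>)"

definition Linf :: "'a::euclidean_space set \<Rightarrow> ('a \<Rightarrow> real) set" where
  "Linf \<Omega> = {u. u \<in> borel_measurable (lebesgue_on \<Omega>) \<and>
                 (\<exists>C. AE x in lebesgue_on \<Omega>. \<bar>u x\<bar> \<le> C)}"

definition Uad :: "'a::euclidean_space set \<Rightarrow> ('a \<Rightarrow> real) \<Rightarrow> ('a \<Rightarrow> real) \<Rightarrow> ('a \<Rightarrow> real) set" where
  "Uad \<Omega> ua ub = {u \<in> L2 \<Omega>. AE x in lebesgue_on \<Omega>. ua x \<le> u x \<and> u x \<le> ub x}"

text \<open>L^2 projection onto U_ad (a metric projection; unique up to a.e. equality).\<close>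
definition PUad :: "'a::euclidean_space set \<Rightarrow> ('a \<Rightarrow> real) \<Rightarrow> ('a \<Rightarrow> real) \<Rightarrow> ('a \<Rightarrow> real) \<Rightarrow> ('a \<Rightarrow> real)" where
  "PUad \<Omega> ua ub v = (SOME u. u \<in> Uad \<Omega> ua ub \<and>
      (\<forall>w \<in> Uad \<Omega> ua ub. l2norm \<Omega> (\<lambda>x. u x - v x) \<le> l2norm \<Omega> (\<lambda>x. w x - v x)))"

definition gam :: "(nat \<Rightarrow> real) \<Rightarrow> nat \<Rightarrow> real" where
  "gam \<alpha> k = (\<Sum>j=1..k. 1 / \<alpha> j)"

definition Rterm :: "(nat \<Rightarrow> real) \<Rightarrow> (nat \<Rightarrow> real) \<Rightarrow> nat \<Rightarrow> real" where
  "Rterm \<alpha> \<epsilon> i = \<epsilon> i / \<alpha> i + (\<epsilon> i)\<^sup>2 / (\<alpha> i)\<^sup>2 + gam \<alpha> (i - 1) * \<epsilon> i / \<alpha> i + (\<epsilon> i)\<^sup>2 / \<alpha> i"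

definition Bres :: "'a::euclidean_space set \<Rightarrow> ('a \<Rightarrow> real) \<Rightarrow> ('a \<Rightarrow> real) \<Rightarrow>
    (('a \<Rightarrow> real) \<Rightarrow> 'b::real_inner) \<Rightarrow> ('b \<Rightarrow> 'a \<Rightarrow> real) \<Rightarrow> 'b \<Rightarrow>
    real \<Rightarrow> ('a \<Rightarrow> real) \<Rightarrow> ('a \<Rightarrow> real) \<Rightarrow> real" where
  "Bres \<Omega> ua ub S Sadj z \<alpha> lm u =
     (1 + 1 / \<alpha>) * l2norm \<Omega> (\<lambda>x. u x - PUad \<Omega> ua ub (\<lambda>y. (1 / \<alpha>) * Sadj (z - S u) y + lm y) x)"

end

theory Submission
  imports Defs
begin

text \<open>
  Write v_k = P(lam_k). Since lam_(k-1) + S*(z - S u_k)/alpha_k = lam_k, the stopping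
  test says exactly that ||u_k - v_k|| is at most eps_k and at most alpha_k eps_k. The
  Bregman distance D_k of ||.||^2/2 between u\<dagger> and v_k, taken for the subgradient lam_k,
  dominates ||u\<dagger> - v_k||^2/2. The three-point identity and the first-order optimality of
  u\<dagger> show that D_k grows by at most O(eps_(k+1)/alpha_(k+1)) per step. The source
  condition u\<dagger> = P(S* w) makes the dual residual s_k = sum_(i<=k) (S u\<dagger> - S u_i)/alpha_i - w
  satisfy ||s_(k+1)||^2 <= ||s_k||^2 - 2 D_(k+1)/alpha_(k+1) + (summable error), so the
  series of D_(k+1)/alpha_(k+1) converges. Together this bounds gamma_k D_k; since
  gamma_k >= k / sup alpha, D_k tends to 0, and with eps_k -> 0 so does ||u_k - u\<dagger>||.
\<close>

section \<open>Calculus in \<open>L\<^sup>2\<close>\<close>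

lemma abs_mult_le_sum_squares: "\<bar>(a::real) * b\<bar> \<le> a\<^sup>2 + b\<^sup>2"
proof -
  have "2 * \<bar>a\<bar> * \<bar>b\<bar> \<le> a\<^sup>2 + b\<^sup>2"
    using sum_squares_bound[of "\<bar>a\<bar>" "\<bar>b\<bar>"] by simp
  moreover have "0 \<le> \<bar>a\<bar> * \<bar>b\<bar>" by simp
  ultimately show ?thesis unfolding abs_mult by linarith
qed

lemma L2_mult_integrable:
  assumes "f \<in> L2 \<Omega>" "g \<in> L2 \<Omega>"
  shows "integrable (lebesgue_on \<Omega>) (\<lambda>x. f x * g x)"
proof (rule Bochner_Integration.integrable_bound)
  show "integrable (lebesgue_on \<Omega>) (\<lambda>x. (f x)\<^sup>2 + (g x)\<^sup>2)"
    using assms by (auto simp: L2_def)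
  show "(\<lambda>x. f x * g x) \<in> borel_measurable (lebesgue_on \<Omega>)"
    using assms by (auto simp: L2_def)
  show "AE x in lebesgue_on \<Omega>. norm (f x * g x) \<le> norm ((f x)\<^sup>2 + (g x)\<^sup>2)"
    using abs_mult_le_sum_squares by auto
qed

lemma L2_add [intro]:
  assumes "f \<in> L2 \<Omega>" "g \<in> L2 \<Omega>"
  shows "(\<lambda>x. f x + g x) \<in> L2 \<Omega>"
proof -
  have "(\<lambda>x. (f x + g x)\<^sup>2) = (\<lambda>x. (f x)\<^sup>2 + 2 * (f x * g x) + (g x)\<^sup>2)"
    by (simp add: power2_sum algebra_simps)
  then show ?thesis
    using assms L2_mult_integrable[OF assms] by (auto simp: L2_def)
qed

lemma L2_scale [intro]: "f \<in> L2 \<Omega> \<Longrightarrow> (\<lambda>x. c * f x) \<in> L2 \<Omega>"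
  by (auto simp: L2_def power_mult_distrib)

lemma L2_diff [intro]:
  assumes "f \<in> L2 \<Omega>" "g \<in> L2 \<Omega>"
  shows "(\<lambda>x. f x - g x) \<in> L2 \<Omega>"
  using L2_add[OF assms(1) L2_scale[OF assms(2), of "-1"]] by simp

lemma L2_sum [intro]:
  assumes "\<And>i. i \<in> I \<Longrightarrow> f i \<in> L2 \<Omega>"
  shows "(\<lambda>x. \<Sum>i\<in>I. f i x) \<in> L2 \<Omega>"
  using assms
proof (induction I rule: infinite_finite_induct)
  case (insert i I)
  then have "(\<lambda>x. f i x + (\<Sum>i\<in>I. f i x)) \<in> L2 \<Omega>" by (intro L2_add) auto
  then show ?case using insert by simp
qed (auto simp: L2_def)

lemma l2inner_commute: "l2inner \<Omega> f g = l2inner \<Omega> g f"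
  unfolding l2inner_def by (simp add: mult.commute)

lemma l2inner_diff_left:
  assumes "f \<in> L2 \<Omega>" "g \<in> L2 \<Omega>" "h \<in> L2 \<Omega>"
  shows "l2inner \<Omega> (\<lambda>x. f x - g x) h = l2inner \<Omega> f h - l2inner \<Omega> g h"
  unfolding l2inner_def left_diff_distrib
  using assms by (intro Bochner_Integration.integral_diff L2_mult_integrable)

lemma l2inner_diff_right:
  assumes "f \<in> L2 \<Omega>" "g \<in> L2 \<Omega>" "h \<in> L2 \<Omega>"
  shows "l2inner \<Omega> f (\<lambda>x. g x - h x) = l2inner \<Omega> f g - l2inner \<Omega> f h"
  using l2inner_diff_left[OF assms(2,3,1)] by (simp add: l2inner_commute[of \<Omega> f])

lemma l2inner_self_nonneg: "0 \<le> l2inner \<Omega> f f"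
  unfolding l2inner_def by (intro integral_nonneg_AE) auto

lemma l2inner_nonneg_AE:
  "AE x in lebesgue_on \<Omega>. 0 \<le> f x * g x \<Longrightarrow> 0 \<le> l2inner \<Omega> f g"
  unfolding l2inner_def by (rule integral_nonneg_AE)

lemma l2norm_nonneg: "0 \<le> l2norm \<Omega> f"
  unfolding l2norm_def by (intro real_sqrt_ge_zero integral_nonneg_AE) auto

lemma l2norm_square: "(l2norm \<Omega> f)\<^sup>2 = l2inner \<Omega> f f"
proof -
  have "0 \<le> (\<integral>x. (f x)\<^sup>2 \<partial>lebesgue_on \<Omega>)" by (intro integral_nonneg_AE) auto
  then show ?thesis unfolding l2norm_def l2inner_def by (simp add: power2_eq_square)
qed

lemma l2norm_le_AE:
  assumes "g \<in> L2 \<Omega>" "AE x in lebesgue_on \<Omega>. \<bar>f x\<bar> \<le> \<bar>g x\<bar>"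
    and "f \<in> L2 \<Omega>"
  shows "l2norm \<Omega> f \<le> l2norm \<Omega> g"
proof -
  have "(\<integral>x. (f x)\<^sup>2 \<partial>lebesgue_on \<Omega>) \<le> (\<integral>x. (g x)\<^sup>2 \<partial>lebesgue_on \<Omega>)"
    using assms by (intro integral_mono_AE) (auto simp: L2_def abs_le_square_iff)
  then show ?thesis by (simp add: l2norm_def)
qed

lemma l2norm_square_integral: "(l2norm \<Omega> f)\<^sup>2 = (\<integral>x. (f x)\<^sup>2 \<partial>lebesgue_on \<Omega>)"
  unfolding l2norm_square l2inner_def by (simp add: power2_eq_square)

lemma L2_diff_square_integrable:
  "f \<in> L2 \<Omega> \<Longrightarrow> g \<in> L2 \<Omega> \<Longrightarrow> integrable (lebesgue_on \<Omega>) (\<lambda>x. (f x - g x)\<^sup>2)"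
  using L2_diff[of f \<Omega> g] by (simp add: L2_def)

lemma l2norm_diff_square_le:
  assumes "f \<in> L2 \<Omega>" "g \<in> L2 \<Omega>" "h \<in> L2 \<Omega>"
  shows "(l2norm \<Omega> (\<lambda>x. f x - h x))\<^sup>2
    \<le> 2 * (l2norm \<Omega> (\<lambda>x. f x - g x))\<^sup>2 + 2 * (l2norm \<Omega> (\<lambda>x. g x - h x))\<^sup>2"
proof -
  have "(\<integral>x. (f x - h x)\<^sup>2 \<partial>lebesgue_on \<Omega>)
      \<le> (\<integral>x. 2 * (f x - g x)\<^sup>2 + 2 * (g x - h x)\<^sup>2 \<partial>lebesgue_on \<Omega>)"
  proof (intro integral_mono)
    show "(f x - h x)\<^sup>2 \<le> 2 * (f x - g x)\<^sup>2 + 2 * (g x - h x)\<^sup>2" for x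
      using sum_squares_bound[of "f x - g x" "g x - h x"] by (simp add: power2_eq_square algebra_simps)
  qed (use assms in \<open>auto intro!: L2_diff_square_integrable Bochner_Integration.integrable_add\<close>)
  then show ?thesis
    using assms by (simp add: l2norm_square_integral L2_diff_square_integrable)
qed

text \<open>The Bregman distance ||u||^2/2 - ||v||^2/2 - (l, u - v) of ||.||^2/2 at v with respect
  to l, rearranged.\<close>

definition bregman_dist :: "'a::euclidean_space set \<Rightarrow> ('a \<Rightarrow> real) \<Rightarrow> ('a \<Rightarrow> real) \<Rightarrow> ('a \<Rightarrow> real) \<Rightarrow> real"
  where "bregman_dist \<Omega> l u v =
    l2inner \<Omega> (\<lambda>x. u x - v x) (\<lambda>x. u x - v x) / 2 + l2inner \<Omega> (\<lambda>x. v x - l x) (\<lambda>x. u x - v x)"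

lemma bregman_dist_three_point:
  assumes "l \<in> L2 \<Omega>" "m \<in> L2 \<Omega>" "u \<in> L2 \<Omega>" "v \<in> L2 \<Omega>" "w \<in> L2 \<Omega>"
  shows "bregman_dist \<Omega> m u w
    = bregman_dist \<Omega> l u v - bregman_dist \<Omega> l w v - l2inner \<Omega> (\<lambda>x. m x - l x) (\<lambda>x. u x - w x)"
  using assms unfolding bregman_dist_def
  by (simp add: l2inner_diff_left l2inner_diff_right L2_diff) (simp add: l2inner_commute field_simps)

section \<open>Estimates for real sequences\<close>

lemma telescoping_sum_le:
  fixes a b d :: "nat \<Rightarrow> real"
  assumes "\<And>j. a (Suc j) \<le> a j - b j + d j" and "\<And>j. 0 \<le> a j"
  shows "(\<Sum>j<k. b j) \<le> a 0 + (\<Sum>j<k. d j)"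
proof -
  have "(\<Sum>j<k. b j) \<le> a 0 - a k + (\<Sum>j<k. d j)"
  proof (induction k)
    case (Suc k)
    then show ?case using assms(1)[of k] by simp
  qed simp
  then show ?thesis using assms(2)[of k] by linarith
qed

lemma weighted_sum_le:
  fixes g c e d :: "nat \<Rightarrow> real"
  assumes "\<And>j. g (Suc j) = g j + c j" and "\<And>j. 0 \<le> g j" and "\<And>j. e (Suc j) \<le> e j + d j"
  shows "g k * e k \<le> g 0 * e 0 + (\<Sum>j<k. c j * e (Suc j)) + (\<Sum>j<k. g j * d j)"
proof (induction k)
  case (Suc k)
  have "g k * e (Suc k) \<le> g k * (e k + d k)"
    using mult_left_mono[OF assms(3) assms(2)] .
  then show ?case using Suc assms(1)[of k] by (simp add: algebra_simps)
qed simp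

lemma tendsto_zero_if_weighted_bounded:
  fixes e g :: "nat \<Rightarrow> real"
  assumes "\<And>k. 0 \<le> e k" and "\<And>k. g k * e k \<le> B" and "\<And>k. c * real k \<le> g k" and "0 < c"
  shows "e \<longlonglongrightarrow> 0"
proof (rule tendsto_sandwich[where f="\<lambda>_. 0" and h="\<lambda>k. B / c / real k"])
  have "e k \<le> B / c / real k" if "1 \<le> k" for k
  proof -
    have "c * real k * e k \<le> g k * e k" using mult_right_mono[OF assms(3) assms(1)] .
    then have "c * real k * e k \<le> B" using assms(2)[of k] by linarith
    then show ?thesis using that \<open>0 < c\<close> by (simp add: field_simps)
  qed
  then show "\<forall>\<^sub>F k in sequentially. e k \<le> B / c / real k"
    by (auto simp: eventually_sequentially)
  show "(\<lambda>k. B / c / real k) \<longlonglongrightarrow> 0" by (rule lim_const_over_n)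
qed (use assms(1) in auto)

lemma gam_Suc: "gam \<alpha> (Suc k) = gam \<alpha> k + 1 / \<alpha> (Suc k)"
  by (simp add: gam_def)

lemma gam_nonneg: "(\<And>i. 1 \<le> i \<Longrightarrow> 0 < \<alpha> i) \<Longrightarrow> 0 \<le> gam \<alpha> k"
  unfolding gam_def by (intro sum_nonneg) (simp add: less_imp_le)

lemma gam_ge_linear:
  assumes "\<And>i. 1 \<le> i \<Longrightarrow> 0 < \<alpha> i" and "\<And>i. 1 \<le> i \<Longrightarrow> \<alpha> i \<le> C"
  shows "real k / C \<le> gam \<alpha> k"
proof -
  have "(\<Sum>i=1..k. 1 / C) \<le> (\<Sum>i=1..k. 1 / \<alpha> i)"
    using assms by (intro sum_mono divide_left_mono) (auto intro: mult_pos_pos order.strict_trans2)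
  then show ?thesis by (simp add: gam_def)
qed

section \<open>Projections\<close>

text \<open>\<open>any_closest_point_dot\<close> asks for a closed set; applying it to the segment from
  \<open>x\<close> to \<open>y\<close> removes that hypothesis.\<close>

lemma convex_closest_point_inner_le:
  fixes a x y :: "'b::real_inner"
  assumes "convex C" "x \<in> C" "y \<in> C" "\<forall>c\<in>C. dist a x \<le> dist a c"
  shows "inner (a - x) (y - x) \<le> 0"
  using any_closest_point_dot[of "closed_segment x y" x y a] assms closed_segment_subset[of x C y]
  by (auto simp: compact_imp_closed)

lemma clamp_closest_real:
  fixes a b v w :: real
  shows "a \<le> w \<Longrightarrow> w \<le> b \<Longrightarrow> \<bar>max a (min b v) - v\<bar> \<le> \<bar>w - v\<bar>"
  by auto

lemma clamp_eq_if_closer_real: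
  fixes a b p v :: real
  shows "a \<le> p \<Longrightarrow> p \<le> b \<Longrightarrow> \<bar>p - v\<bar> \<le> \<bar>max a (min b v) - v\<bar> \<Longrightarrow> p = max a (min b v)"
  by auto

lemma clamp_variational_real:
  fixes a b v w :: real
  shows "a \<le> w \<Longrightarrow> w \<le> b \<Longrightarrow> 0 \<le> (max a (min b v) - v) * (w - max a (min b v))"
  by (auto simp: zero_le_mult_iff)

locale box_constraints =
  fixes \<Omega> :: "'a::euclidean_space set" and ua ub :: "'a \<Rightarrow> real"
  assumes \<Omega>_meas: "\<Omega> \<in> sets lebesgue" and \<Omega>_bdd: "bounded \<Omega>"
    and ua: "ua \<in> Linf \<Omega>" and ub: "ub \<in> Linf \<Omega>"
    and ua_le_ub: "AE x in lebesgue_on \<Omega>. ua x \<le> ub x"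
begin

abbreviation "U \<equiv> Uad \<Omega> ua ub"
abbreviation "P \<equiv> PUad \<Omega> ua ub"

lemma Linf_imp_L2:
  assumes "f \<in> Linf \<Omega>"
  shows "f \<in> L2 \<Omega>"
proof -
  obtain C where f: "f \<in> borel_measurable (lebesgue_on \<Omega>)"
    and C: "AE x in lebesgue_on \<Omega>. \<bar>f x\<bar> \<le> C"
    using assms by (auto simp: Linf_def)
  have "finite_measure (lebesgue_on \<Omega>)"
    using finite_measure_lebesgue_on bounded_set_imp_lmeasurable \<Omega>_meas \<Omega>_bdd by blast
  moreover have "AE x in lebesgue_on \<Omega>. norm ((f x)\<^sup>2) \<le> C\<^sup>2"
    using C by eventually_elim (simp add: abs_le_square_iff[symmetric])
  ultimately have "integrable (lebesgue_on \<Omega>) (\<lambda>x. (f x)\<^sup>2)"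
    using f by (intro finite_measure.integrable_const_bound) auto
  then show ?thesis using f by (simp add: L2_def)
qed

lemma Uad_L2: "u \<in> U \<Longrightarrow> u \<in> L2 \<Omega>"
  by (simp add: Uad_def)

lemma Uad_bounds: "u \<in> U \<Longrightarrow> AE x in lebesgue_on \<Omega>. ua x \<le> u x \<and> u x \<le> ub x"
  by (simp add: Uad_def)

definition clamp :: "('a \<Rightarrow> real) \<Rightarrow> 'a \<Rightarrow> real"
  where "clamp v = (\<lambda>x. max (ua x) (min (ub x) (v x)))"

lemma clamp_Uad:
  assumes "v \<in> L2 \<Omega>"
  shows "clamp v \<in> U"
proof -
  obtain Ca Cb where "AE x in lebesgue_on \<Omega>. \<bar>ua x\<bar> \<le> Ca" "AE x in lebesgue_on \<Omega>. \<bar>ub x\<bar> \<le> Cb"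
    using ua ub by (auto simp: Linf_def)
  then have "AE x in lebesgue_on \<Omega>. \<bar>clamp v x\<bar> \<le> Ca + Cb"
    by eventually_elim (auto simp: clamp_def)
  moreover have "ua \<in> borel_measurable (lebesgue_on \<Omega>)" "ub \<in> borel_measurable (lebesgue_on \<Omega>)"
    "v \<in> borel_measurable (lebesgue_on \<Omega>)"
    using ua ub assms by (auto simp: Linf_def L2_def)
  then have "clamp v \<in> borel_measurable (lebesgue_on \<Omega>)"
    unfolding clamp_def by measurable
  ultimately have "clamp v \<in> L2 \<Omega>"
    by (intro Linf_imp_L2) (auto simp: Linf_def)
  moreover have "AE x in lebesgue_on \<Omega>. ua x \<le> clamp v x \<and> clamp v x \<le> ub x"
    using ua_le_ub by eventually_elim (auto simp: clamp_def)
  ultimately show ?thesis by (simp add: Uad_def)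
qed

lemma clamp_closest:
  assumes "v \<in> L2 \<Omega>" "w \<in> U"
  shows "l2norm \<Omega> (\<lambda>x. clamp v x - v x) \<le> l2norm \<Omega> (\<lambda>x. w x - v x)"
  using Uad_bounds[OF assms(2)] clamp_Uad[OF assms(1)] assms
  by (intro l2norm_le_AE) (auto simp: clamp_def Uad_def intro: clamp_closest_real elim!: AE_mp)

lemma PUad_closest:
  assumes "v \<in> L2 \<Omega>"
  shows "P v \<in> U" and "\<And>w. w \<in> U \<Longrightarrow> l2norm \<Omega> (\<lambda>x. P v x - v x) \<le> l2norm \<Omega> (\<lambda>x. w x - v x)"
proof -
  have "P v \<in> U \<and> (\<forall>w \<in> U. l2norm \<Omega> (\<lambda>x. P v x - v x) \<le> l2norm \<Omega> (\<lambda>x. w x - v x))"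
    unfolding PUad_def
    by (rule someI[where x="clamp v"]) (use clamp_Uad[OF assms] clamp_closest[OF assms] in auto)
  then show "P v \<in> U" and "\<And>w. w \<in> U \<Longrightarrow> l2norm \<Omega> (\<lambda>x. P v x - v x) \<le> l2norm \<Omega> (\<lambda>x. w x - v x)"
    by auto
qed

text \<open>\<open>PUad\<close> chooses some minimiser; minimisers agree with the pointwise clamp only a.e.\<close>

lemma PUad_eq_clamp_AE:
  assumes "v \<in> L2 \<Omega>"
  shows "AE x in lebesgue_on \<Omega>. P v x = clamp v x"
proof -
  define d where "d x = (P v x - v x)\<^sup>2 - (clamp v x - v x)\<^sup>2" for x
  have PU: "P v \<in> U" and cU: "clamp v \<in> U"
    using PUad_closest(1)[OF assms] clamp_Uad[OF assms] .
  have int_P: "integrable (lebesgue_on \<Omega>) (\<lambda>x. (P v x - v x)\<^sup>2)"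
    and int_c: "integrable (lebesgue_on \<Omega>) (\<lambda>x. (clamp v x - v x)\<^sup>2)"
    using PU cU assms by (auto intro: L2_diff_square_integrable dest: Uad_L2)
  have d_nonneg: "AE x in lebesgue_on \<Omega>. 0 \<le> d x"
    using Uad_bounds[OF PU] by eventually_elim (auto simp: d_def clamp_def abs_le_square_iff[symmetric])
  have "l2norm \<Omega> (\<lambda>x. P v x - v x) \<le> l2norm \<Omega> (\<lambda>x. clamp v x - v x)"
    using PUad_closest(2)[OF assms cU] .
  then have "(\<integral>x. d x \<partial>lebesgue_on \<Omega>) \<le> 0"
    unfolding d_def Bochner_Integration.integral_diff[OF int_P int_c] by (simp add: l2norm_def)
  then have "AE x in lebesgue_on \<Omega>. d x = 0"
    using integral_nonneg_eq_0_iff_AE[OF _ d_nonneg] integral_nonneg_AE[OF d_nonneg] int_P int_c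
    by (simp add: d_def)
  then show ?thesis
    using Uad_bounds[OF PU]
  proof eventually_elim
    case (elim x)
    then have "\<bar>P v x - v x\<bar> \<le> \<bar>clamp v x - v x\<bar>"
      by (simp add: d_def abs_le_square_iff)
    then show ?case using elim unfolding clamp_def by (intro clamp_eq_if_closer_real) auto
  qed
qed

lemma PUad_variational_AE:
  assumes "v \<in> L2 \<Omega>" "w \<in> U"
  shows "AE x in lebesgue_on \<Omega>. 0 \<le> (P v x - v x) * (w x - P v x)"
  using PUad_eq_clamp_AE[OF assms(1)] Uad_bounds[OF assms(2)]
  by eventually_elim (simp add: clamp_def clamp_variational_real)

lemma Uad_convex_comb:
  assumes "u \<in> U" "w \<in> U" "0 \<le> t" "t \<le> 1"
  shows "(\<lambda>x. u x + t * (w x - u x)) \<in> U"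
proof -
  have "(\<lambda>x. u x + t * (w x - u x)) \<in> L2 \<Omega>"
    using assms by (intro L2_add L2_scale L2_diff Uad_L2)
  moreover have "AE x in lebesgue_on \<Omega>. ua x \<le> u x + t * (w x - u x) \<and> u x + t * (w x - u x) \<le> ub x"
    using Uad_bounds[OF assms(1)] Uad_bounds[OF assms(2)]
  proof eventually_elim
    case (elim x)
    then show ?case
      using convexD_alt[OF convex_real_interval(5)[of "ua x" "ub x"], of "u x" "w x" t] assms(3,4)
      by (auto simp: algebra_simps)
  qed
  ultimately show ?thesis by (simp add: Uad_def)
qed

definition Uad_diam :: real
  where "Uad_diam = l2norm \<Omega> (\<lambda>x. ub x - ua x)"

lemma Uad_diam_nonneg: "0 \<le> Uad_diam"
  unfolding Uad_diam_def by (rule l2norm_nonneg)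

lemma Uad_dist_le_diam:
  assumes "u \<in> U" "w \<in> U"
  shows "l2norm \<Omega> (\<lambda>x. u x - w x) \<le> Uad_diam"
  unfolding Uad_diam_def
proof (rule l2norm_le_AE)
  show "(\<lambda>x. ub x - ua x) \<in> L2 \<Omega>" "(\<lambda>x. u x - w x) \<in> L2 \<Omega>"
    using L2_diff Linf_imp_L2[OF ua] Linf_imp_L2[OF ub] Uad_L2[OF assms(1)] Uad_L2[OF assms(2)]
    by blast+
  show "AE x in lebesgue_on \<Omega>. \<bar>u x - w x\<bar> \<le> \<bar>ub x - ua x\<bar>"
    using Uad_bounds[OF assms(1)] Uad_bounds[OF assms(2)] by eventually_elim auto
qed

lemma bregman_dist_PUad_ge:
  assumes "l \<in> L2 \<Omega>" "u \<in> U"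
  shows "l2inner \<Omega> (\<lambda>x. u x - P l x) (\<lambda>x. u x - P l x) / 2 \<le> bregman_dist \<Omega> l u (P l)"
  using l2inner_nonneg_AE[OF PUad_variational_AE[OF assms]] by (simp add: bregman_dist_def)

lemma bregman_dist_source_le:
  assumes u: "AE x in lebesgue_on \<Omega>. u x = P m x" "u \<in> L2 \<Omega>"
    and "m \<in> L2 \<Omega>" "l \<in> L2 \<Omega>" "v \<in> U"
  shows "l2inner \<Omega> (\<lambda>x. l x - m x) (\<lambda>x. u x - v x) \<le> - bregman_dist \<Omega> l u v"
proof -
  have "AE x in lebesgue_on \<Omega>. 0 \<le> (u x - m x) * (v x - u x)"
    using u(1) PUad_variational_AE[OF assms(3,5)] by eventually_elim simp
  then have "0 \<le> l2inner \<Omega> (\<lambda>x. u x - m x) (\<lambda>x. v x - u x)"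
    by (rule l2inner_nonneg_AE)
  moreover have "0 \<le> l2inner \<Omega> (\<lambda>x. u x - v x) (\<lambda>x. u x - v x)"
    by (rule l2inner_self_nonneg)
  moreover have "v \<in> L2 \<Omega>" using assms(5) by (rule Uad_L2)
  ultimately show ?thesis
    using assms unfolding bregman_dist_def
    by (simp add: l2inner_diff_left l2inner_diff_right L2_diff) (simp add: l2inner_commute field_simps)
qed

end

section \<open>The inexact Bregman iteration\<close>

locale inexact_bregman = box_constraints \<Omega> ua ub
  for \<Omega> :: "'a::euclidean_space set" and ua ub :: "'a \<Rightarrow> real" +
  fixes S :: "('a \<Rightarrow> real) \<Rightarrow> 'b::real_inner" and Sadj :: "'b \<Rightarrow> 'a \<Rightarrow> real"
    and z :: 'b and K :: real and w :: 'b and udag :: "'a \<Rightarrow> real"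
    and \<alpha> \<epsilon> :: "nat \<Rightarrow> real" and \<alpha>max :: real and uin lam :: "nat \<Rightarrow> 'a \<Rightarrow> real"
  assumes S_add: "\<And>u v. u \<in> L2 \<Omega> \<Longrightarrow> v \<in> L2 \<Omega> \<Longrightarrow> S (\<lambda>x. u x + v x) = S u + S v"
    and S_scale: "\<And>c u. u \<in> L2 \<Omega> \<Longrightarrow> S (\<lambda>x. c * u x) = c *\<^sub>R S u"
    and K_nonneg: "0 \<le> K"
    and S_bound: "\<And>u. u \<in> L2 \<Omega> \<Longrightarrow> norm (S u) \<le> K * l2norm \<Omega> u"
    and Sadj_L2: "\<And>y. Sadj y \<in> L2 \<Omega>"
    and Sadj_adj: "\<And>y u. u \<in> L2 \<Omega> \<Longrightarrow> l2inner \<Omega> (Sadj y) u = inner y (S u)"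
    and udag_adm: "udag \<in> Uad \<Omega> ua ub"
    and udag_opt: "\<And>u. u \<in> Uad \<Omega> ua ub \<Longrightarrow> norm (S udag - z) \<le> norm (S u - z)"
    and source: "AE x in lebesgue_on \<Omega>. udag x = PUad \<Omega> ua ub (Sadj w) x"
    and \<alpha>_pos: "\<And>k. 1 \<le> k \<Longrightarrow> 0 < \<alpha> k"
    and \<alpha>_le: "\<And>k. 1 \<le> k \<Longrightarrow> \<alpha> k \<le> \<alpha>max"
    and \<epsilon>_pos: "\<And>k. 1 \<le> k \<Longrightarrow> 0 < \<epsilon> k"
    and R_summable: "summable (\<lambda>i. Rterm \<alpha> \<epsilon> (Suc i))"
    and lam_eq: "\<And>k. lam k = (\<lambda>x. \<Sum>i=1..k. (1 / \<alpha> i) * Sadj (z - S (uin i)) x)"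
    and uin_adm: "\<And>k. 1 \<le> k \<Longrightarrow> uin k \<in> Uad \<Omega> ua ub"
    and uin_inexact: "\<And>k. 1 \<le> k \<Longrightarrow> Bres \<Omega> ua ub S Sadj z (\<alpha> k) (lam (k - 1)) (uin k) \<le> \<epsilon> k"
begin

lemma udag_L2: "udag \<in> L2 \<Omega>"
  using udag_adm by (rule Uad_L2)

lemma uin_L2: "1 \<le> k \<Longrightarrow> uin k \<in> L2 \<Omega>"
  using uin_adm by (rule Uad_L2)

lemma S_diff:
  assumes "u \<in> L2 \<Omega>" "v \<in> L2 \<Omega>"
  shows "S (\<lambda>x. u x - v x) = S u - S v"
  using S_add[OF assms(1) L2_scale[OF assms(2), of "-1"]] S_scale[OF assms(2), of "-1"] by simp

lemma S_dist_le:
  assumes "u \<in> L2 \<Omega>" "v \<in> L2 \<Omega>"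
  shows "norm (S u - S v) \<le> K * l2norm \<Omega> (\<lambda>x. u x - v x)"
  using S_bound[OF L2_diff[OF assms]] by (simp add: S_diff[OF assms])

lemma S_Uad_dist_le:
  assumes "u \<in> U" "v \<in> U"
  shows "norm (S u - S v) \<le> K * Uad_diam"
  using S_dist_le[OF Uad_L2[OF assms(1)] Uad_L2[OF assms(2)]]
    mult_left_mono[OF Uad_dist_le_diam[OF assms] K_nonneg] by linarith

lemma convex_S_Uad: "convex (S ` U)"
proof (rule convexI)
  fix y1 y2 and s t :: real
  assume "y1 \<in> S ` U" "y2 \<in> S ` U" "0 \<le> s" "0 \<le> t" "s + t = 1"
  then obtain u1 u2 where u: "u1 \<in> U" "u2 \<in> U" "y1 = S u1" "y2 = S u2"
    by blast
  have s: "s = 1 - t" using \<open>s + t = 1\<close> by simp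
  have L2: "(\<lambda>x. u2 x - u1 x) \<in> L2 \<Omega>" using u by (intro L2_diff Uad_L2)
  have eq: "s *\<^sub>R y1 + t *\<^sub>R y2 = S (\<lambda>x. u1 x + t * (u2 x - u1 x))"
    using S_add[OF Uad_L2[OF u(1)] L2_scale[OF L2]] S_scale[OF L2] S_diff[OF Uad_L2 Uad_L2, OF u(2,1)]
    by (simp add: u s algebra_simps)
  have "(\<lambda>x. u1 x + t * (u2 x - u1 x)) \<in> U"
    using \<open>0 \<le> s\<close> \<open>0 \<le> t\<close> s by (intro Uad_convex_comb[OF u(1,2)]) simp_all
  then show "s *\<^sub>R y1 + t *\<^sub>R y2 \<in> S ` U" unfolding eq by (rule imageI)
qed

lemma optimality_condition:
  assumes "u \<in> U"
  shows "inner (z - S udag) (S u - S udag) \<le> 0"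
proof -
  have "dist z (S udag) \<le> dist z c" if "c \<in> S ` U" for c
    using that udag_opt by (auto simp: dist_norm norm_minus_commute)
  then show ?thesis
    using convex_closest_point_inner_le[OF convex_S_Uad imageI[OF udag_adm] imageI[OF assms]] by blast
qed

lemma lam_L2: "lam k \<in> L2 \<Omega>"
  unfolding lam_eq by (intro L2_sum L2_scale Sadj_L2)

lemma lam_step: "1 \<le> k \<Longrightarrow> (\<lambda>x. (1 / \<alpha> k) * Sadj (z - S (uin k)) x + lam (k - 1) x) = lam k"
  by (cases k) (auto simp: lam_eq)

lemma l2inner_lam:
  assumes "f \<in> L2 \<Omega>"
  shows "l2inner \<Omega> (lam k) f = (\<Sum>i=1..k. (1 / \<alpha> i) * inner (z - S (uin i)) (S f))"
proof -
  have "l2inner \<Omega> (lam k) f = (\<Sum>i=1..k. (1 / \<alpha> i) * l2inner \<Omega> (Sadj (z - S (uin i))) f)"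
    unfolding l2inner_def lam_eq sum_distrib_right using assms
    by (subst Bochner_Integration.integral_sum)
      (auto simp: mult.assoc intro!: Bochner_Integration.integrable_mult_right L2_mult_integrable Sadj_L2)
  then show ?thesis using Sadj_adj[OF assms] by simp
qed

lemma l2inner_lam_Suc_diff:
  assumes "f \<in> L2 \<Omega>"
  shows "l2inner \<Omega> (\<lambda>x. lam (Suc j) x - lam j x) f
    = (1 / \<alpha> (Suc j)) * inner (z - S (uin (Suc j))) (S f)"
  using assms by (simp add: l2inner_diff_left lam_L2 l2inner_lam)

definition proj_lam :: "nat \<Rightarrow> 'a \<Rightarrow> real"
  where "proj_lam k = P (lam k)"

lemma proj_lam_Uad: "proj_lam k \<in> U"
  unfolding proj_lam_def using lam_L2 by (rule PUad_closest(1))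

lemma proj_lam_L2: "proj_lam k \<in> L2 \<Omega>"
  using proj_lam_Uad by (rule Uad_L2)

text \<open>By \<open>lam_step\<close>, \<open>Bres\<close> is \<open>1 + 1 / \<alpha> k\<close> times the distance from \<open>uin k\<close> to
  \<open>proj_lam k\<close>.\<close>

lemma uin_near_proj_lam:
  assumes "1 \<le> k"
  shows "l2norm \<Omega> (\<lambda>x. uin k x - proj_lam k x) \<le> \<epsilon> k"
    and "l2norm \<Omega> (\<lambda>x. uin k x - proj_lam k x) \<le> \<alpha> k * \<epsilon> k"
proof -
  define n where "n = l2norm \<Omega> (\<lambda>x. uin k x - proj_lam k x)"
  have "0 \<le> n" "0 < \<alpha> k" unfolding n_def using l2norm_nonneg \<alpha>_pos[OF assms] .
  moreover have "n + n / \<alpha> k \<le> \<epsilon> k"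
    using uin_inexact[OF assms] unfolding Bres_def lam_step[OF assms] n_def proj_lam_def
    by (simp add: algebra_simps)
  ultimately have h: "n + n * \<alpha> k \<le> \<epsilon> k * \<alpha> k" and "0 \<le> n * \<alpha> k" "0 < \<alpha> k"
    by (simp_all add: field_simps)
  have "n * \<alpha> k \<le> \<epsilon> k * \<alpha> k" using h \<open>0 \<le> n\<close> by linarith
  then show "n \<le> \<epsilon> k" using \<open>0 < \<alpha> k\<close> by simp
  show "n \<le> \<alpha> k * \<epsilon> k" using h \<open>0 \<le> n * \<alpha> k\<close> by (simp add: mult.commute)
qed

definition gap :: "nat \<Rightarrow> real"
  where "gap k = bregman_dist \<Omega> (lam k) udag (proj_lam k)"

lemma gap_ge: "l2inner \<Omega> (\<lambda>x. udag x - proj_lam k x) (\<lambda>x. udag x - proj_lam k x) / 2 \<le> gap k"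
  unfolding gap_def proj_lam_def using lam_L2 udag_adm by (rule bregman_dist_PUad_ge)

lemma gap_nonneg: "0 \<le> gap k"
  using gap_ge[of k] l2inner_self_nonneg[of \<Omega> "\<lambda>x. udag x - proj_lam k x"] by linarith

definition rel_err :: "nat \<Rightarrow> real"
  where "rel_err j = \<epsilon> (Suc j) / \<alpha> (Suc j)"

lemma gam_alpha_nonneg: "0 \<le> gam \<alpha> k"
  using \<alpha>_pos by (rule gam_nonneg)

lemma rel_err_le_Rterm:
  shows "0 \<le> rel_err j" and "rel_err j \<le> Rterm \<alpha> \<epsilon> (Suc j)"
    and "0 \<le> gam \<alpha> j * rel_err j" and "gam \<alpha> j * rel_err j \<le> Rterm \<alpha> \<epsilon> (Suc j)"
proof -
  have "0 < \<alpha> (Suc j)" "0 < \<epsilon> (Suc j)" using \<alpha>_pos \<epsilon>_pos by auto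
  then show "0 \<le> rel_err j" "0 \<le> gam \<alpha> j * rel_err j"
    and "rel_err j \<le> Rterm \<alpha> \<epsilon> (Suc j)" "gam \<alpha> j * rel_err j \<le> Rterm \<alpha> \<epsilon> (Suc j)"
    using gam_alpha_nonneg[of j] unfolding rel_err_def Rterm_def by simp_all
qed

lemma summable_rel_err: "summable rel_err"
  by (rule summable_comparison_test'[OF R_summable, of 0]) (simp add: rel_err_le_Rterm)

lemma summable_gam_rel_err: "summable (\<lambda>j. gam \<alpha> j * rel_err j)"
  by (rule summable_comparison_test'[OF R_summable, of 0]) (simp add: rel_err_le_Rterm)

lemma residual_inner_ge:
  assumes "1 \<le> k"
  shows "- ((norm (z - S udag) + K * Uad_diam) * K * \<epsilon> k)
    \<le> inner (z - S (uin k)) (S udag - S (proj_lam k))"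
proof -
  define y where "y = S (uin k)"
  have "inner (z - S udag) (y - S udag) \<le> 0"
    unfolding y_def using uin_adm[OF assms] by (rule optimality_condition)
  moreover have "0 \<le> inner (S udag - y) (S udag - y)" by simp
  ultimately have descent: "0 \<le> inner (z - y) (S udag - y)"
    by (simp add: inner_diff_left inner_diff_right inner_commute)
  have "norm (z - y) \<le> norm (z - S udag) + norm (S udag - y)"
    using norm_triangle_ineq[of "z - S udag" "S udag - y"] by simp
  also have "norm (S udag - y) \<le> K * Uad_diam"
    unfolding y_def using udag_adm uin_adm[OF assms] by (rule S_Uad_dist_le)
  finally have zy: "norm (z - y) \<le> norm (z - S udag) + K * Uad_diam" by simp
  have "norm (y - S (proj_lam k)) \<le> K * l2norm \<Omega> (\<lambda>x. uin k x - proj_lam k x)"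
    unfolding y_def using uin_L2[OF assms] proj_lam_L2 by (rule S_dist_le)
  also have "\<dots> \<le> K * \<epsilon> k"
    using uin_near_proj_lam(1)[OF assms] K_nonneg by (rule mult_left_mono)
  finally have "\<bar>inner (z - y) (y - S (proj_lam k))\<bar> \<le> (norm (z - S udag) + K * Uad_diam) * (K * \<epsilon> k)"
    using Cauchy_Schwarz_ineq2[of "z - y"] zy by (meson mult_mono norm_ge_zero order_trans)
  moreover have "inner (z - y) (S udag - S (proj_lam k))
      = inner (z - y) (S udag - y) + inner (z - y) (y - S (proj_lam k))"
    by (simp add: inner_diff_right)
  ultimately show ?thesis using descent unfolding y_def abs_le_iff mult.assoc by linarith
qed

lemma gap_Suc_le: "gap (Suc j) \<le> gap j + (norm (z - S udag) + K * Uad_diam) * K * rel_err j"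
proof -
  let ?v = "proj_lam (Suc j)"
  have "gap (Suc j) = gap j - bregman_dist \<Omega> (lam j) ?v (proj_lam j)
      - l2inner \<Omega> (\<lambda>x. lam (Suc j) x - lam j x) (\<lambda>x. udag x - ?v x)"
    unfolding gap_def using lam_L2 lam_L2 udag_L2 proj_lam_L2 proj_lam_L2
    by (rule bregman_dist_three_point)
  moreover have "0 \<le> bregman_dist \<Omega> (lam j) ?v (proj_lam j)"
    using bregman_dist_PUad_ge[OF lam_L2[of j] proj_lam_Uad[of "Suc j"]]
      l2inner_self_nonneg[of \<Omega> "\<lambda>x. ?v x - proj_lam j x"]
    unfolding proj_lam_def by linarith
  moreover have "l2inner \<Omega> (\<lambda>x. lam (Suc j) x - lam j x) (\<lambda>x. udag x - ?v x)
      = inner (z - S (uin (Suc j))) (S udag - S ?v) / \<alpha> (Suc j)"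
    using l2inner_lam_Suc_diff[OF L2_diff[OF udag_L2 proj_lam_L2]] S_diff[OF udag_L2 proj_lam_L2] by simp
  moreover have "- ((norm (z - S udag) + K * Uad_diam) * K * rel_err j)
      \<le> inner (z - S (uin (Suc j))) (S udag - S ?v) / \<alpha> (Suc j)"
    using divide_right_mono[OF residual_inner_ge[of "Suc j"] less_imp_le[OF \<alpha>_pos[of "Suc j"]]]
    unfolding rel_err_def by simp
  ultimately show ?thesis by linarith
qed

definition dual_res :: "nat \<Rightarrow> 'b"
  where "dual_res k = (\<Sum>i=1..k. (1 / \<alpha> i) *\<^sub>R (S udag - S (uin i))) - w"

lemma dual_res_Suc: "dual_res (Suc j) = dual_res j + (1 / \<alpha> (Suc j)) *\<^sub>R (S udag - S (uin (Suc j)))"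
  by (simp add: dual_res_def)

lemma dual_res_inner_le: "inner (dual_res k) (S udag - S (proj_lam k)) \<le> - gap k"
proof -
  define f where "f = (\<lambda>x. udag x - proj_lam k x)"
  define X where "X = S udag - S (proj_lam k)"
  have f: "f \<in> L2 \<Omega>" unfolding f_def using udag_L2 proj_lam_L2 by (rule L2_diff)
  have Sf: "S f = X" unfolding f_def X_def using udag_L2 proj_lam_L2 by (rule S_diff)
  have "(1 / \<alpha> i) * inner (z - S (uin i)) X
      = (1 / \<alpha> i) * inner (z - S udag) X + (1 / \<alpha> i) * inner (S udag - S (uin i)) X" for i
    by (simp add: inner_diff_left algebra_simps)
  then have "(\<Sum>i=1..k. (1 / \<alpha> i) * inner (z - S (uin i)) X)
      = gam \<alpha> k * inner (z - S udag) X + (\<Sum>i=1..k. (1 / \<alpha> i) * inner (S udag - S (uin i)) X)"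
    unfolding gam_def sum_distrib_right by (simp only: sum.distrib)
  moreover have "inner (dual_res k) X = (\<Sum>i=1..k. (1 / \<alpha> i) * inner (S udag - S (uin i)) X) - inner w X"
    by (simp add: dual_res_def inner_diff_left inner_sum_left)
  ultimately have "inner (dual_res k) X
      = (\<Sum>i=1..k. (1 / \<alpha> i) * inner (z - S (uin i)) X) - gam \<alpha> k * inner (z - S udag) X - inner w X"
    by simp
  also have "\<dots> = l2inner \<Omega> (\<lambda>x. lam k x - Sadj w x) f - gam \<alpha> k * inner (z - S udag) X"
    using f by (simp add: l2inner_diff_left lam_L2 Sadj_L2 l2inner_lam Sadj_adj Sf)
  also have "\<dots> \<le> - gap k - gam \<alpha> k * inner (z - S udag) X"
    using bregman_dist_source_le[OF source udag_L2 Sadj_L2 lam_L2 proj_lam_Uad]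
    unfolding gap_def f_def by simp
  also have "\<dots> \<le> - gap k"
    using optimality_condition[OF proj_lam_Uad[of k]] gam_alpha_nonneg[of k] unfolding X_def
    by (simp add: inner_diff_right)
  finally show ?thesis unfolding X_def .
qed

lemma norm_dual_res_le: "norm (dual_res k) \<le> norm w + gam \<alpha> k * (K * Uad_diam)"
proof -
  have "norm (\<Sum>i=1..k. (1 / \<alpha> i) *\<^sub>R (S udag - S (uin i))) \<le> (\<Sum>i=1..k. (1 / \<alpha> i) * (K * Uad_diam))"
  proof (rule order_trans[OF norm_sum sum_mono])
    fix i assume "i \<in> {1..k}"
    then have "0 < \<alpha> i" "norm (S udag - S (uin i)) \<le> K * Uad_diam"
      using S_Uad_dist_le[OF udag_adm uin_adm] \<alpha>_pos by auto
    then show "norm ((1 / \<alpha> i) *\<^sub>R (S udag - S (uin i))) \<le> (1 / \<alpha> i) * (K * Uad_diam)"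
      by (simp add: divide_right_mono)
  qed
  then show ?thesis
    unfolding dual_res_def gam_def sum_distrib_right[symmetric]
    using norm_triangle_ineq4 by (smt (verit))
qed

lemma dual_res_inner_uin_le:
  assumes "1 \<le> k"
  shows "inner (dual_res k) (S udag - S (uin k))
    \<le> - gap k + norm (dual_res k) * (K * l2norm \<Omega> (\<lambda>x. uin k x - proj_lam k x))"
proof -
  have "inner (dual_res k) (S (proj_lam k) - S (uin k)) \<le> norm (dual_res k) * norm (S (uin k) - S (proj_lam k))"
    using norm_cauchy_schwarz[of "dual_res k" "S (proj_lam k) - S (uin k)"]
    by (simp add: norm_minus_commute[of "S (proj_lam k)"])
  also have "\<dots> \<le> norm (dual_res k) * (K * l2norm \<Omega> (\<lambda>x. uin k x - proj_lam k x))"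
    using S_dist_le[OF uin_L2[OF assms] proj_lam_L2] by (simp add: mult_left_mono)
  finally show ?thesis
    using dual_res_inner_le[of k] by (simp add: inner_diff_right)
qed

lemma dual_res_Suc_le:
  "(norm (dual_res (Suc j)))\<^sup>2 \<le> (norm (dual_res j))\<^sup>2 - 2 * (gap (Suc j) / \<alpha> (Suc j))
     + 2 * (K * (norm w + K * Uad_diam)) * (rel_err j + gam \<alpha> j * rel_err j)"
proof -
  define c where "c = 1 / \<alpha> (Suc j)"
  define d where "d = S udag - S (uin (Suc j))"
  define s where "s = dual_res (Suc j)"
  define n where "n = l2norm \<Omega> (\<lambda>x. uin (Suc j) x - proj_lam (Suc j) x)"
  define D where "D = K * Uad_diam"
  have c: "0 < c" and \<rho>: "rel_err j = c * \<epsilon> (Suc j)"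
    using \<alpha>_pos[of "Suc j"] by (simp_all add: c_def rel_err_def)
  have n: "0 \<le> n" "n \<le> \<epsilon> (Suc j)" "c * n \<le> \<epsilon> (Suc j)"
    using l2norm_nonneg uin_near_proj_lam[of "Suc j"] \<alpha>_pos[of "Suc j"]
    by (auto simp: n_def c_def field_simps)
  have D: "0 \<le> D" and W: "0 \<le> norm w + gam \<alpha> j * D"
    using K_nonneg Uad_diam_nonneg gam_alpha_nonneg[of j] by (simp_all add: D_def)
  have prev: "dual_res j = s - c *\<^sub>R d"
    using dual_res_Suc[of j] by (simp add: s_def c_def d_def)
  have "(norm (dual_res j))\<^sup>2 = (norm s)\<^sup>2 - 2 * c * inner s d + c\<^sup>2 * (norm d)\<^sup>2"
    unfolding prev power2_norm_eq_inner
    by (simp add: inner_diff_left inner_diff_right inner_commute power2_eq_square algebra_simps)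
  then have step: "(norm s)\<^sup>2 \<le> (norm (dual_res j))\<^sup>2 + 2 * c * inner s d"
    by simp
  have "2 * c * inner s d \<le> 2 * c * (- gap (Suc j) + norm s * (K * n))"
    using dual_res_inner_uin_le[of "Suc j"] c by (simp add: s_def d_def n_def)
  also have "\<dots> = - 2 * (gap (Suc j) / \<alpha> (Suc j)) + 2 * (c * (norm s * (K * n)))"
    by (simp add: c_def algebra_simps)
  finally have inner: "2 * c * inner s d \<le> - 2 * (gap (Suc j) / \<alpha> (Suc j)) + 2 * (c * (norm s * (K * n)))" .
  have "norm s \<le> (norm w + gam \<alpha> j * D) + c * D"
    using norm_dual_res_le[of "Suc j"] by (simp add: s_def c_def D_def gam_Suc algebra_simps)
  then have "c * (norm s * (K * n)) \<le> c * (((norm w + gam \<alpha> j * D) + c * D) * (K * n))"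
    using c n(1) K_nonneg by (intro mult_left_mono mult_right_mono) auto
  also have "\<dots> = K * (norm w + gam \<alpha> j * D) * (c * n) + K * D * (c * (c * n))"
    by (simp add: algebra_simps)
  also have "\<dots> \<le> K * (norm w + gam \<alpha> j * D) * rel_err j + K * D * rel_err j"
    unfolding \<rho> using n c K_nonneg D W
    by (intro add_mono mult_left_mono) (auto simp: mult_left_mono)
  also have "\<dots> \<le> K * (norm w + D) * (rel_err j + gam \<alpha> j * rel_err j)"
    using K_nonneg rel_err_le_Rterm(1)[of j] gam_alpha_nonneg[of j]
    by (simp add: algebra_simps mult_nonneg_nonneg)
  finally show ?thesis
    using step inner unfolding s_def D_def by linarith
qed

lemma gap_weighted_sum_bounded: "\<exists>B. \<forall>k. (\<Sum>j<k. gap (Suc j) / \<alpha> (Suc j)) \<le> B"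
proof -
  define C where "C = 2 * (K * (norm w + K * Uad_diam))"
  define d where "d j = C * (rel_err j + gam \<alpha> j * rel_err j)" for j
  have "summable d"
    unfolding d_def by (intro summable_mult summable_add summable_rel_err summable_gam_rel_err)
  have d_nonneg: "0 \<le> d j" for j
    using K_nonneg Uad_diam_nonneg rel_err_le_Rterm(1,3)[of j] by (simp add: d_def C_def)
  have "(\<Sum>j<k. gap (Suc j) / \<alpha> (Suc j)) \<le> ((norm w)\<^sup>2 + suminf d) / 2" for k
  proof -
    have "(\<Sum>j<k. 2 * (gap (Suc j) / \<alpha> (Suc j))) \<le> (norm (dual_res 0))\<^sup>2 + (\<Sum>j<k. d j)"
      using dual_res_Suc_le by (intro telescoping_sum_le) (simp_all add: d_def C_def)
    also have "(\<Sum>j<k. d j) \<le> suminf d"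
      using \<open>summable d\<close> d_nonneg by (intro sum_le_suminf) auto
    finally have "2 * (\<Sum>j<k. gap (Suc j) / \<alpha> (Suc j)) \<le> (norm (dual_res 0))\<^sup>2 + suminf d"
      by (simp only: sum_distrib_left)
    then show ?thesis by (simp add: dual_res_def)
  qed
  then show ?thesis by blast
qed

lemma gam_gap_bounded: "\<exists>B. \<forall>k. gam \<alpha> k * gap k \<le> B"
proof -
  define C where "C = (norm (z - S udag) + K * Uad_diam) * K"
  obtain B where B: "\<And>k. (\<Sum>j<k. gap (Suc j) / \<alpha> (Suc j)) \<le> B"
    using gap_weighted_sum_bounded by blast
  have "gam \<alpha> k * gap k \<le> B + C * (\<Sum>j. gam \<alpha> j * rel_err j)" for k
  proof -
    have "gam \<alpha> k * gap k
        \<le> gam \<alpha> 0 * gap 0 + (\<Sum>j<k. 1 / \<alpha> (Suc j) * gap (Suc j)) + (\<Sum>j<k. gam \<alpha> j * (C * rel_err j))"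
      by (intro weighted_sum_le gam_Suc gam_alpha_nonneg gap_Suc_le[unfolded C_def[symmetric]])
    also have "(\<Sum>j<k. gam \<alpha> j * (C * rel_err j)) \<le> C * (\<Sum>j. gam \<alpha> j * rel_err j)"
      unfolding mult.left_commute[of _ C] sum_distrib_left[symmetric]
      using summable_gam_rel_err rel_err_le_Rterm(3) K_nonneg Uad_diam_nonneg
      by (intro mult_left_mono sum_le_suminf) (auto simp: C_def)
    finally show ?thesis
      using B[of k] by (simp add: gam_def)
  qed
  then show ?thesis by blast
qed

lemma \<alpha>max_pos: "0 < \<alpha>max"
  using \<alpha>_pos[of 1] \<alpha>_le[of 1] by linarith

lemma gap_tendsto_zero: "gap \<longlonglongrightarrow> 0"
proof -
  obtain B where "\<And>k. gam \<alpha> k * gap k \<le> B" using gam_gap_bounded by blast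
  moreover have "1 / \<alpha>max * real k \<le> gam \<alpha> k" for k
    using gam_ge_linear[OF \<alpha>_pos \<alpha>_le] by simp
  ultimately show ?thesis
    using gap_nonneg \<alpha>max_pos by (intro tendsto_zero_if_weighted_bounded[where c="1 / \<alpha>max"]) auto
qed

lemma eps_tendsto_zero: "\<epsilon> \<longlonglongrightarrow> 0"
proof -
  have "(\<lambda>j. \<epsilon> (Suc j)) \<longlonglongrightarrow> 0"
  proof (rule tendsto_sandwich[where f="\<lambda>_. 0" and h="\<lambda>j. \<alpha>max * rel_err j"])
    show "\<forall>\<^sub>F j in sequentially. 0 \<le> \<epsilon> (Suc j)"
      using \<epsilon>_pos by (simp add: less_imp_le)
    have "\<epsilon> (Suc j) = \<alpha> (Suc j) * rel_err j" for j
      using \<alpha>_pos[of "Suc j"] by (simp add: rel_err_def)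
    then show "\<forall>\<^sub>F j in sequentially. \<epsilon> (Suc j) \<le> \<alpha>max * rel_err j"
      using \<alpha>_le rel_err_le_Rterm(1) by (simp add: mult_right_mono)
    show "(\<lambda>j. \<alpha>max * rel_err j) \<longlonglongrightarrow> 0"
      using tendsto_mult_right_zero[OF summable_LIMSEQ_zero[OF summable_rel_err]] by simp
  qed simp
  then show ?thesis by (rule LIMSEQ_imp_Suc)
qed

lemma uin_dist_square_le:
  assumes "1 \<le> k"
  shows "(l2norm \<Omega> (\<lambda>x. uin k x - udag x))\<^sup>2 \<le> 2 * (\<epsilon> k)\<^sup>2 + 4 * gap k"
proof -
  have "(l2norm \<Omega> (\<lambda>x. uin k x - udag x))\<^sup>2
      \<le> 2 * (l2norm \<Omega> (\<lambda>x. uin k x - proj_lam k x))\<^sup>2 + 2 * (l2norm \<Omega> (\<lambda>x. proj_lam k x - udag x))\<^sup>2"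
    using uin_L2[OF assms] proj_lam_L2 udag_L2 by (rule l2norm_diff_square_le)
  moreover have "(l2norm \<Omega> (\<lambda>x. uin k x - proj_lam k x))\<^sup>2 \<le> (\<epsilon> k)\<^sup>2"
    using uin_near_proj_lam(1)[OF assms] l2norm_nonneg by (rule power_mono)
  moreover have "(l2norm \<Omega> (\<lambda>x. proj_lam k x - udag x))\<^sup>2
      = l2inner \<Omega> (\<lambda>x. udag x - proj_lam k x) (\<lambda>x. udag x - proj_lam k x)"
    unfolding l2norm_square l2inner_def by (simp add: algebra_simps)
  ultimately show ?thesis using gap_ge[of k] by linarith
qed

theorem uin_tendsto_udag: "(\<lambda>k. l2norm \<Omega> (\<lambda>x. uin k x - udag x)) \<longlonglongrightarrow> 0"
proof (rule tendsto_sandwich[where f="\<lambda>_. 0" and h="\<lambda>k. sqrt (2 * (\<epsilon> k)\<^sup>2 + 4 * gap k)"])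
  show "\<forall>\<^sub>F k in sequentially. l2norm \<Omega> (\<lambda>x. uin k x - udag x) \<le> sqrt (2 * (\<epsilon> k)\<^sup>2 + 4 * gap k)"
    using uin_dist_square_le by (auto simp: eventually_sequentially intro: real_le_rsqrt)
  have "(\<lambda>k. sqrt (2 * (\<epsilon> k)\<^sup>2 + 4 * gap k)) \<longlonglongrightarrow> sqrt (2 * 0\<^sup>2 + 4 * 0)"
    by (intro tendsto_intros eps_tendsto_zero gap_tendsto_zero)
  then show "(\<lambda>k. sqrt (2 * (\<epsilon> k)\<^sup>2 + 4 * gap k)) \<longlonglongrightarrow> 0" by simp
qed (simp_all add: l2norm_nonneg)

end

theorem corollary4p2:
  fixes \<Omega> :: "'a::euclidean_space set"
    and S :: "('a \<Rightarrow> real) \<Rightarrow> 'b::{real_inner, complete_space}"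
    and Sadj :: "'b \<Rightarrow> 'a \<Rightarrow> real"
    and z :: 'b
    and ua ub udag :: "'a \<Rightarrow> real"
    and \<alpha> \<epsilon> :: "nat \<Rightarrow> real"
    and uin lam :: "nat \<Rightarrow> 'a \<Rightarrow> real"
  assumes \<Omega>_meas: "\<Omega> \<in> sets lebesgue" and \<Omega>_bdd: "bounded \<Omega>"
    and S_add: "\<And>u v. u \<in> L2 \<Omega> \<Longrightarrow> v \<in> L2 \<Omega> \<Longrightarrow> S (\<lambda>x. u x + v x) = S u + S v"
    and S_scale: "\<And>c u. u \<in> L2 \<Omega> \<Longrightarrow> S (\<lambda>x. c * u x) = c *\<^sub>R S u"
    and S_bdd: "\<exists>K. \<forall>u \<in> L2 \<Omega>. norm (S u) \<le> K * l2norm \<Omega> u"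
    and Sadj_L2: "\<And>w. Sadj w \<in> L2 \<Omega>"
    and Sadj_adj: "\<And>w u. u \<in> L2 \<Omega> \<Longrightarrow> l2inner \<Omega> (Sadj w) u = inner w (S u)"
    and ua: "ua \<in> Linf \<Omega>" and ub: "ub \<in> Linf \<Omega>"
    and uab: "AE x in lebesgue_on \<Omega>. ua x \<le> ub x"
    and udag_adm: "udag \<in> Uad \<Omega> ua ub"
    and udag_opt: "\<And>u. u \<in> Uad \<Omega> ua ub \<Longrightarrow>
        (1/2) * (norm (S udag - z))\<^sup>2 \<le> (1/2) * (norm (S u - z))\<^sup>2"
    and source: "\<exists>w. AE x in lebesgue_on \<Omega>. udag x = PUad \<Omega> ua ub (Sadj w) x"
    and \<alpha>_pos: "\<And>k. k \<ge> 1 \<Longrightarrow> \<alpha> k > 0"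
    and \<alpha>_bdd: "\<exists>C. \<forall>k \<ge> 1. \<alpha> k \<le> C"
    and \<epsilon>_pos: "\<And>k. k \<ge> 1 \<Longrightarrow> \<epsilon> k > 0"
    and R_sum: "summable (\<lambda>i. Rterm \<alpha> \<epsilon> (Suc i))"
    and init_u: "uin 0 = PUad \<Omega> ua ub (\<lambda>x. 0)"
    and init_lam: "lam 0 = (\<lambda>x. 0)"
    and step_adm: "\<And>k. k \<ge> 1 \<Longrightarrow> uin k \<in> Uad \<Omega> ua ub"
    and step_inexact: "\<And>k. k \<ge> 1 \<Longrightarrow> Bres \<Omega> ua ub S Sadj z (\<alpha> k) (lam (k - 1)) (uin k) \<le> \<epsilon> k"
    and step_lam: "\<And>k. k \<ge> 1 \<Longrightarrow>
        lam k = (\<lambda>x. \<Sum>i=1..k. (1 / \<alpha> i) * Sadj (z - S (uin i)) x)"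
  shows "(\<lambda>k. l2norm \<Omega> (\<lambda>x. uin k x - udag x)) \<longlonglongrightarrow> 0"
proof -
  obtain K where K: "\<And>u. u \<in> L2 \<Omega> \<Longrightarrow> norm (S u) \<le> K * l2norm \<Omega> u"
    using S_bdd by blast
  obtain w where w: "AE x in lebesgue_on \<Omega>. udag x = PUad \<Omega> ua ub (Sadj w) x"
    using source by blast
  obtain \<alpha>max where \<alpha>max: "\<And>k. 1 \<le> k \<Longrightarrow> \<alpha> k \<le> \<alpha>max"
    using \<alpha>_bdd by blast
  have S_bound: "norm (S u) \<le> \<bar>K\<bar> * l2norm \<Omega> u" if "u \<in> L2 \<Omega>" for u
    using K[OF that] mult_right_mono[OF abs_ge_self l2norm_nonneg, of K \<Omega> u] by linarith
  have opt: "norm (S udag - z) \<le> norm (S u - z)" if "u \<in> Uad \<Omega> ua ub" for u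
    using udag_opt[OF that] by (auto intro!: power2_le_imp_le)
  have lam: "lam k = (\<lambda>x. \<Sum>i=1..k. (1 / \<alpha> i) * Sadj (z - S (uin i)) x)" for k
    using init_lam step_lam by (cases "k = 0") auto
  \<comment> \<open>\<open>uin 0\<close> never enters: the estimates only involve the iterates with \<open>k \<ge> 1\<close>.\<close>
  interpret inexact_bregman \<Omega> ua ub S Sadj z "\<bar>K\<bar>" w udag \<alpha> \<epsilon> \<alpha>max uin lam
    by unfold_locales (fact assms S_bound opt lam w \<alpha>max abs_ge_zero)+
  show ?thesis by (rule uin_tendsto_udag)
qed

end
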